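(* For every prior $(q_H,q_1,q_2,q_L)$ with strictly positive entries summing to $1$ and every receiver type $i\in[-1/2,1/2]$, all types accept the recommendation in the limit $R\to 1$ and in the limit $R\to 0$; that is, the limits $\lim_{R\to1}\big(\Delta_O^B(R)-i\,\Delta_S^B(R)\big)$ and $\lim_{R\to0}\big(\Delta_O^B(R)-i\,\Delta_S^B(R)\big)$ exist and are nonnegative.
   Context: Setting. Consumer types are $i\in[-1/2,1/2]$, distributed according to a continuous cumulative distribution function $F$ with full support on $[-1/2,1/2]$. A product has a quality vector $(Q_1,Q_2)\in\{0,1\}^2$; a type-$i$ consumer gets payoff $(1/2+i)Q_1+(1/2-i)Q_2$ from it. The versions $(1,1),(1,0),(0,1),(0,0)$ have prior probabilities $q_H,q_1,q_2,q_L$. Given a threshold $R\in(0,1)$, a sender with type drawn from $F$ gives a buy recommendation $B$ if her payoff from the product is at least $R$ and a don't-buy recommendation otherwise. Let $\phi_1(R)=1-F(R-1/2)$, $\phi_2(R)=F(1/2-R)$, $\pi^B(R)=q_H+q_1\phi_1(R)+q_2\phi_2(R)$, and posteriors after $B$: $p^B_H=q_H/\pi^B$, $p^B_1=q_1\phi_1(R)/\pi^B$, $p^B_2=q_2\phi_2(R)/\pi^B$. Define $\Delta_O^B(R)=p_H^B-q_H+\frac{p_1^B-q_1}{2}+\frac{p_2^B-q_2}{2}$ and $\Delta_S^B(R)=(p_2^B-q_2)-(p_1^B-q_1)$. A receiver of type $i$ accepts the recommendation at threshold $R$ if and only if $\Delta_O^B(R)\ge i\,\Delta_S^B(R)$ (equivalently,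 the expected payoff of the product after a buy recommendation is at least that of an unrecommended product, and after a don't-buy recommendation at most that). *)

theory Defs
  imports "HOL-Analysis.Analysis"
begin

definition cdf_full_support :: "(real \<Rightarrow> real) \<Rightarrow> bool" where
  "cdf_full_support F \<longleftrightarrow> mono F \<and> continuous_on UNIV F
     \<and> (\<forall>x. x \<le> -1/2 \<longrightarrow> F x = 0) \<and> (\<forall>x. x \<ge> 1/2 \<longrightarrow> F x = 1)
     \<and> strict_mono_on {-1/2..1/2} F"

definition phi1 :: "(real \<Rightarrow> real) \<Rightarrow> real \<Rightarrow> real" where
  "phi1 F R = 1 - F (R - 1/2)"

definition phi2 :: "(real \<Rightarrow> real) \<Rightarrow> real \<Rightarrow> real" where
  "phi2 F R = F (1/2 - R)"

definition piB :: "(real \<Rightarrow> real) \<Rightarrow> real \<Rightarrow> real \<Rightarrow> real \<Rightarrow> real \<Rightarrow> real" where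
  "piB F qH q1 q2 R = qH + q1 * phi1 F R + q2 * phi2 F R"

definition pBH :: "(real \<Rightarrow> real) \<Rightarrow> real \<Rightarrow> real \<Rightarrow> real \<Rightarrow> real \<Rightarrow> real" where
  "pBH F qH q1 q2 R = qH / piB F qH q1 q2 R"

definition pB1 :: "(real \<Rightarrow> real) \<Rightarrow> real \<Rightarrow> real \<Rightarrow> real \<Rightarrow> real \<Rightarrow> real" where
  "pB1 F qH q1 q2 R = q1 * phi1 F R / piB F qH q1 q2 R"

definition pB2 :: "(real \<Rightarrow> real) \<Rightarrow> real \<Rightarrow> real \<Rightarrow> real \<Rightarrow> real \<Rightarrow> real" where
  "pB2 F qH q1 q2 R = q2 * phi2 F R / piB F qH q1 q2 R"

definition DeltaOB :: "(real \<Rightarrow> real) \<Rightarrow> real \<Rightarrow> real \<Rightarrow> real \<Rightarrow> real \<Rightarrow> real" where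
  "DeltaOB F qH q1 q2 R = pBH F qH q1 q2 R - qH + (pB1 F qH q1 q2 R - q1) / 2
                          + (pB2 F qH q1 q2 R - q2) / 2"

definition DeltaSB :: "(real \<Rightarrow> real) \<Rightarrow> real \<Rightarrow> real \<Rightarrow> real \<Rightarrow> real \<Rightarrow> real" where
  "DeltaSB F qH q1 q2 R = (pB2 F qH q1 q2 R - q2) - (pB1 F qH q1 q2 R - q1)"

end

theory Submission
  imports Defs
begin

text \<open>Since F is continuous and the buy probability piB is bounded below by qH > 0, the
  acceptance margin is continuous in R, so both limits are its values at R = 1 and R = 0.
  At R = 1 only the version (1,1) is ever recommended, the posterior puts all mass on it,
  and the margin is 1 - qH - (q1+q2)/2 - i (q1 - q2) \<ge> qL.  At R = 0 every version but (0,0)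
  is recommended, the posterior is the prior rescaled by 1/(1 - qL), and the margin is
  (1/(1 - qL) - 1)(qH + (q1+q2)/2 - i (q2 - q1)).  Both are nonnegative because
  |i (q1 - q2)| \<le> (q1+q2)/2 for |i| \<le> 1/2.\<close>

definition acceptance_margin :: "(real \<Rightarrow> real) \<Rightarrow> real \<Rightarrow> real \<Rightarrow> real \<Rightarrow> real \<Rightarrow> real \<Rightarrow> real" where
  "acceptance_margin F qH q1 q2 i R = DeltaOB F qH q1 q2 R - i * DeltaSB F qH q1 q2 R"

lemma cdf_full_support_range:
  assumes "cdf_full_support F"
  shows "0 \<le> F x" "F x \<le> 1"
proof -
  have "mono F"
    using assms by (simp add: cdf_full_support_def)
  then have "F (min x (-1)) \<le> F x" "F x \<le> F (max x 1)"
    by (simp_all add: monoD)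
  moreover have "F (min x (-1)) = 0" "F (max x 1) = 1"
    using assms by (auto simp: cdf_full_support_def)
  ultimately show "0 \<le> F x" "F x \<le> 1" by simp_all
qed

lemma
  assumes "cdf_full_support F"
  shows phi1_at_0: "phi1 F 0 = 1" and phi2_at_0: "phi2 F 0 = 1"
    and phi1_at_1: "phi1 F 1 = 0" and phi2_at_1: "phi2 F 1 = 0"
  using assms by (simp_all add: cdf_full_support_def phi1_def phi2_def)

lemma
  assumes "continuous_on UNIV F"
  shows isCont_phi1: "isCont (phi1 F) x" and isCont_phi2: "isCont (phi2 F) x"
proof -
  have F: "isCont F y" for y
    using assms by (simp add: continuous_on_eq_continuous_at)
  show "isCont (phi1 F) x" "isCont (phi2 F) x"
    unfolding phi1_def phi2_def by (auto intro!: continuous_intros isCont_o2[OF _ F])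
qed

lemma piB_pos:
  assumes "cdf_full_support F" "qH > 0" "q1 \<ge> 0" "q2 \<ge> 0"
  shows "piB F qH q1 q2 R > 0"
proof -
  have "q1 * phi1 F R \<ge> 0" "q2 * phi2 F R \<ge> 0"
    using assms cdf_full_support_range[OF assms(1)] by (simp_all add: phi1_def phi2_def)
  with \<open>qH > 0\<close> show ?thesis by (simp add: piB_def)
qed

lemma isCont_acceptance_margin:
  assumes "cdf_full_support F" "qH > 0" "q1 \<ge> 0" "q2 \<ge> 0"
  shows "isCont (acceptance_margin F qH q1 q2 i) R"
proof -
  have cont: "continuous_on UNIV F"
    using assms(1) by (simp add: cdf_full_support_def)
  have "isCont (piB F qH q1 q2) R"
    unfolding piB_def by (intro continuous_intros isCont_phi1[OF cont] isCont_phi2[OF cont])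
  moreover have "piB F qH q1 q2 R \<noteq> 0"
    using piB_pos[OF assms] by (simp add: less_imp_neq[symmetric])
  ultimately show ?thesis
    unfolding acceptance_margin_def DeltaOB_def DeltaSB_def pBH_def pB1_def pB2_def
    by (intro continuous_intros isCont_phi1[OF cont] isCont_phi2[OF cont]) simp_all
qed

lemma abs_mult_diff_le_half_sum:
  fixes i a b :: real
  assumes "\<bar>i\<bar> \<le> 1/2" "a \<ge> 0" "b \<ge> 0"
  shows "\<bar>i * (a - b)\<bar> \<le> (a + b) / 2"
proof -
  have "\<bar>i * (a - b)\<bar> = \<bar>i\<bar> * \<bar>a - b\<bar>" by (simp add: abs_mult)
  also have "\<dots> \<le> 1/2 * \<bar>a - b\<bar>" using assms(1) by (intro mult_right_mono) auto
  also have "\<dots> \<le> (a + b) / 2" using assms(2,3) by auto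
  finally show ?thesis .
qed

lemma acceptance_margin_at_1:
  assumes "cdf_full_support F" "qH > 0"
  shows "acceptance_margin F qH q1 q2 i 1 = 1 - qH - (q1 + q2) / 2 - i * (q1 - q2)"
  using assms(2)
  by (simp add: acceptance_margin_def DeltaOB_def DeltaSB_def pBH_def pB1_def pB2_def piB_def
      phi1_at_1[OF assms(1)] phi2_at_1[OF assms(1)] field_simps)

lemma acceptance_margin_at_0:
  assumes "cdf_full_support F" "qH + q1 + q2 > 0"
  shows "acceptance_margin F qH q1 q2 i 0
    = (1 / (qH + q1 + q2) - 1) * (qH + (q1 + q2) / 2 - i * (q2 - q1))"
proof -
  define P where "P = qH + q1 + q2"
  have "P > 0" using assms(2) by (simp add: P_def)
  have "piB F qH q1 q2 0 = P"
    by (simp add: piB_def P_def phi1_at_0[OF assms(1)] phi2_at_0[OF assms(1)])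
  then have "acceptance_margin F qH q1 q2 i 0
      = qH / P - qH + (q1 / P - q1) / 2 + (q2 / P - q2) / 2 - i * ((q2 / P - q2) - (q1 / P - q1))"
    by (simp add: acceptance_margin_def DeltaOB_def DeltaSB_def pBH_def pB1_def pB2_def
        phi1_at_0[OF assms(1)] phi2_at_0[OF assms(1)])
  also have "\<dots> = (1 / P - 1) * (qH + (q1 + q2) / 2 - i * (q2 - q1))"
    using \<open>P > 0\<close> by (simp add: field_simps)
  finally show ?thesis by (simp add: P_def)
qed

lemma acceptance_margin_at_1_nonneg:
  assumes "cdf_full_support F" "qH > 0" "q1 \<ge> 0" "q2 \<ge> 0" "qL \<ge> 0"
    and "qH + q1 + q2 + qL = 1" and "\<bar>i\<bar> \<le> 1/2"
  shows "acceptance_margin F qH q1 q2 i 1 \<ge> 0"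
  using acceptance_margin_at_1[OF assms(1,2), of q1 q2 i]
    abs_le_D1[OF abs_mult_diff_le_half_sum[OF assms(7,3,4)]] assms(5,6)
  by argo

lemma acceptance_margin_at_0_nonneg:
  assumes "cdf_full_support F" "qH > 0" "q1 \<ge> 0" "q2 \<ge> 0" "qL \<ge> 0"
    and "qH + q1 + q2 + qL = 1" and "\<bar>i\<bar> \<le> 1/2"
  shows "acceptance_margin F qH q1 q2 i 0 \<ge> 0"
proof -
  have P: "0 < qH + q1 + q2" "qH + q1 + q2 \<le> 1"
    using assms(2-6) by linarith+
  then have "1 / (qH + q1 + q2) - 1 \<ge> 0" by simp
  moreover have "qH + (q1 + q2) / 2 - i * (q2 - q1) \<ge> 0"
    using abs_le_D1[OF abs_mult_diff_le_half_sum[OF assms(7,4,3)]] assms(2) by argo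
  ultimately show ?thesis
    by (simp add: acceptance_margin_at_0[OF assms(1) P(1)])
qed

theorem proposition2:
  fixes F :: "real \<Rightarrow> real" and qH q1 q2 qL i :: real
  assumes "cdf_full_support F"
    and "qH > 0" and "q1 > 0" and "q2 > 0" and "qL > 0"
    and "qH + q1 + q2 + qL = 1"
    and "i \<in> {-1/2..1/2}"
  shows "(\<exists>L. ((\<lambda>R. DeltaOB F qH q1 q2 R - i * DeltaSB F qH q1 q2 R) \<longlongrightarrow> L) (at_left 1) \<and> L \<ge> 0)
       \<and> (\<exists>L. ((\<lambda>R. DeltaOB F qH q1 q2 R - i * DeltaSB F qH q1 q2 R) \<longlongrightarrow> L) (at_right 0) \<and> L \<ge> 0)"
proof -
  let ?g = "acceptance_margin F qH q1 q2 i"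
  have q: "q1 \<ge> 0" "q2 \<ge> 0" "qL \<ge> 0" "\<bar>i\<bar> \<le> 1/2"
    using assms(3-5,7) by auto
  have "(?g \<longlongrightarrow> ?g R) (at R within S)" for R S
    using isCont_acceptance_margin[OF assms(1,2) q(1,2)]
    by (simp add: isCont_def tendsto_mono[OF at_le[OF subset_UNIV]])
  moreover have "?g 1 \<ge> 0" "?g 0 \<ge> 0"
    using acceptance_margin_at_1_nonneg acceptance_margin_at_0_nonneg assms(1,2,6) q by blast+
  ultimately show ?thesis
    unfolding acceptance_margin_def[abs_def] by blast
qed

end
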